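(* Let $m\ge 2$ and let $\mathcal{H}$ be the incidence structure produced by the Construction described in the context (from a projective plane $\mathcal{P}$ of order $m$, affine planes $\mathcal{A}_P$ of order $m$ for each point $P$ of $\mathcal{P}$, orthogonal arrays $\mathcal{O}_l=OA(2,m+1,m)$ for each line $l$ of $\mathcal{P}$, and admissible choices $\pi$ and $\beta$). Then $\mathcal{H}$ is a $2$-uniform $(m,m)$PH-plane.
   Context: An orthogonal array $OA(2,k,v)$ is a $v^2\times k$ array with entries from a $v$-element symbol set such that in any two columns every ordered pair of symbols occurs in exactly one row. A projective plane of order $m$ has $m+1$ points on each line and $m+1$ lines through each point; an affine plane of order $m$ has $m^2$ points, $m$ points per line, and its lines split into $m+1$ parallel classes, each consisting of $m$ pairwise disjoint lines covering all points. Construction (Algorithm 1). Let $\mathcal{P}$ be a projective plane of order $m$. For each point $P$ of $\mathcal{P}$ let $\mathcal{A}_P$ be an affine plane of order $m$ (not necessarily all the same). For each line $l$ of $\mathcal{P}$ let $\mathcal{O}_l$ be an $OA(2,m+1,m)$ on a symbol set $\Sigma_l$ whose $m+1$ columns are labelled bijectively by the $m+1$ points of $l$. For each incident pair $P\in l$ choose a parallel class $\pi(P,l)$ of $\mathcal{A}_P$ such that, for each fixed $P$, the map $l\mapsto\pi(P,l)$ is a bijection from the $m+1$ lines of $\mathcal{P}$ through $P$ to the $m+1$ parallel classes of $\mathcal{A}_P$; and choose a bijection $\beta_{P,l}$ from $\Sigma_l$ to the $m$ lines of $\pi(P,l)$. The points of $\mathcal{H}$ are the pairs $(P,x)$ with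 $P$ a point of $\mathcal{P}$ and $x$ a point of $\mathcal{A}_P$. For each line $l$ of $\mathcal{P}$ and each row $r$ of $\mathcal{O}_l$, $\mathcal{H}$ has the line $\bigcup_{P\in l}\{(P,x): x\in \beta_{P,l}(\mathcal{O}_l(r,P))\}$, where $\mathcal{O}_l(r,P)$ is the entry of $\mathcal{O}_l$ in row $r$ and the column labelled $P$. Incidence is membership. Projective Hjelmslev plane: an incidence structure $\mathcal{H}$ such that (1) any two points are incident with at least one line; (2) any two lines meet in at least one point; (3) two lines meeting in more than one point are called neighbours; (4) two points incident with more than one common line are called neighbours; (5) there is an incidence-preserving surjection $\phi$ from $\mathcal{H}$ onto an ordinary projective plane with $\phi(P)=\phi(Q)\iff P\sim Q$ for points and $\phi(g)=\phi(h)\iff g\sim h$ for lines (where $\sim$ is the neighbour relation, reflexively extended; it is an equivalence relation). A $(t,r)$PH-plane is a projective Hjelmslev plane in which each line has $t(r+1)$ points and, for each point $P$ on a line $g$, exactly $t$ points of $g$ are neighbours of $P$ (including $P$); then the image projective plane has order $r$. Affine Hjelmslev plane: an incidence structure such that any two points are incident with at least one line, lines meeting in more than one point are neighbours, and there is an incidence-preserving surjection $\phi$ onto an ordinary affine plane with $\phi(P)=\phi(Q)\iff P\sim Q$, $\phi(g)=\phi(h)\iff g\sim h$, and lines with no common point mapped to parallel lines. Uniformity: a $1$-uniform projective (resp. affine) Hjelmslev plane is an ordinary projective (resp. affine) plane. For a point $P$, the point-neighbourhood restriction $\bar P$ is the incidence structure whose points are the points $Q\sim P$ and whose lines are the nonempty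 sets $g\cap\bar P$ for lines $g$ of $\mathcal{H}$. A projective (resp. affine) Hjelmslev plane is $n$-uniform if for every point $P$, $\bar P$ is an $(n-1)$-uniform affine Hjelmslev plane, and every line of $\bar P$ is the restriction of the same number of lines of $\mathcal{H}$. *)

theory Defs
  imports Main
begin

definition projective_plane :: "'a set \<Rightarrow> 'b set \<Rightarrow> ('a \<Rightarrow> 'b \<Rightarrow> bool) \<Rightarrow> bool" where
  "projective_plane P L inc \<longleftrightarrow>
     (\<forall>p\<in>P. \<forall>q\<in>P. p \<noteq> q \<longrightarrow> (\<exists>!l. l \<in> L \<and> inc p l \<and> inc q l)) \<and>
     (\<forall>l\<in>L. \<forall>k\<in>L. l \<noteq> k \<longrightarrow> (\<exists>!p. p \<in> P \<and> inc p l \<and> inc p k)) \<and>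
     (\<exists>a\<in>P. \<exists>b\<in>P. \<exists>c\<in>P. \<exists>d\<in>P. distinct [a,b,c,d] \<and>
        (\<forall>l\<in>L. \<not> (inc a l \<and> inc b l \<and> inc c l)) \<and>
        (\<forall>l\<in>L. \<not> (inc a l \<and> inc b l \<and> inc d l)) \<and>
        (\<forall>l\<in>L. \<not> (inc a l \<and> inc c l \<and> inc d l)) \<and>
        (\<forall>l\<in>L. \<not> (inc b l \<and> inc c l \<and> inc d l)))"

definition projective_plane_of_order :: "'a set \<Rightarrow> 'b set \<Rightarrow> ('a \<Rightarrow> 'b \<Rightarrow> bool) \<Rightarrow> nat \<Rightarrow> bool" where
  "projective_plane_of_order P L inc m \<longleftrightarrow>
     projective_plane P L inc \<and>
     (\<forall>l\<in>L. card {p\<in>P. inc p l} = m + 1) \<and>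
     (\<forall>p\<in>P. card {l\<in>L. inc p l} = m + 1)"

definition parallel_lines :: "'a set \<Rightarrow> ('a \<Rightarrow> 'b \<Rightarrow> bool) \<Rightarrow> 'b \<Rightarrow> 'b \<Rightarrow> bool" where
  "parallel_lines P inc l k \<longleftrightarrow> l = k \<or> \<not> (\<exists>p\<in>P. inc p l \<and> inc p k)"

definition affine_plane :: "'a set \<Rightarrow> 'b set \<Rightarrow> ('a \<Rightarrow> 'b \<Rightarrow> bool) \<Rightarrow> bool" where
  "affine_plane P L inc \<longleftrightarrow>
     (\<forall>p\<in>P. \<forall>q\<in>P. p \<noteq> q \<longrightarrow> (\<exists>!l. l \<in> L \<and> inc p l \<and> inc q l)) \<and>
     (\<forall>l\<in>L. \<forall>p\<in>P. \<not> inc p l \<longrightarrow>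
        (\<exists>!k. k \<in> L \<and> inc p k \<and> \<not> (\<exists>q\<in>P. inc q l \<and> inc q k))) \<and>
     (\<exists>a\<in>P. \<exists>b\<in>P. \<exists>c\<in>P. \<forall>l\<in>L. \<not> (inc a l \<and> inc b l \<and> inc c l))"

definition affine_plane_of_order :: "'x set \<Rightarrow> 'x set set \<Rightarrow> nat \<Rightarrow> bool" where
  "affine_plane_of_order X L m \<longleftrightarrow>
     affine_plane X L (\<in>) \<and> (\<forall>g\<in>L. g \<subseteq> X) \<and>
     card X = m^2 \<and> (\<forall>g\<in>L. card g = m)"

definition parallel_classes :: "'x set \<Rightarrow> 'x set set \<Rightarrow> 'x set set set" where
  "parallel_classes X L =
     {C. C \<subseteq> L \<and> (\<forall>g\<in>C. \<forall>h\<in>C. g \<noteq> h \<longrightarrow> g \<inter> h = {}) \<and> \<Union>C = X}"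

text \<open>Rows indexed by R, columns by C (so k = card C), symbols S, entries A r c.\<close>
definition OA2 :: "'r set \<Rightarrow> 'c set \<Rightarrow> 's set \<Rightarrow> ('r \<Rightarrow> 'c \<Rightarrow> 's) \<Rightarrow> nat \<Rightarrow> bool" where
  "OA2 R C S A v \<longleftrightarrow>
     finite R \<and> card R = v^2 \<and> card S = v \<and>
     (\<forall>r\<in>R. \<forall>c\<in>C. A r c \<in> S) \<and>
     (\<forall>c1\<in>C. \<forall>c2\<in>C. c1 \<noteq> c2 \<longrightarrow>
        (\<forall>s1\<in>S. \<forall>s2\<in>S. \<exists>!r. r \<in> R \<and> A r c1 = s1 \<and> A r c2 = s2))"

definition H_points :: "'a set \<Rightarrow> ('a \<Rightarrow> 'x set) \<Rightarrow> ('a \<times> 'x) set" where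
  "H_points Pts X = {(P, x). P \<in> Pts \<and> x \<in> X P}"

definition H_line :: "'a set \<Rightarrow> ('a \<Rightarrow> 'b \<Rightarrow> bool) \<Rightarrow> ('a \<Rightarrow> 'b \<Rightarrow> 's \<Rightarrow> 'x set)
    \<Rightarrow> ('b \<Rightarrow> 'r \<Rightarrow> 'a \<Rightarrow> 's) \<Rightarrow> 'b \<Rightarrow> 'r \<Rightarrow> ('a \<times> 'x) set" where
  "H_line Pts inc \<beta> Arr l r = {(P, x). P \<in> Pts \<and> inc P l \<and> x \<in> \<beta> P l (Arr l r P)}"

definition H_lines :: "'a set \<Rightarrow> 'b set \<Rightarrow> ('a \<Rightarrow> 'b \<Rightarrow> bool) \<Rightarrow> ('b \<Rightarrow> 'r set)
    \<Rightarrow> ('a \<Rightarrow> 'b \<Rightarrow> 's \<Rightarrow> 'x set) \<Rightarrow> ('b \<Rightarrow> 'r \<Rightarrow> 'a \<Rightarrow> 's) \<Rightarrow> ('a \<times> 'x) set set" where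
  "H_lines Pts Lns inc R \<beta> Arr = {H_line Pts inc \<beta> Arr l r | l r. l \<in> Lns \<and> r \<in> R l}"

definition pt_nb :: "'p set set \<Rightarrow> 'p \<Rightarrow> 'p \<Rightarrow> bool" where
  "pt_nb L p q \<longleftrightarrow> p = q \<or> (\<exists>g\<in>L. \<exists>h\<in>L. g \<noteq> h \<and> p \<in> g \<and> q \<in> g \<and> p \<in> h \<and> q \<in> h)"

definition ln_nb :: "'p set \<Rightarrow> 'p set \<Rightarrow> bool" where
  "ln_nb g h \<longleftrightarrow> g = h \<or> (\<exists>p q. p \<noteq> q \<and> p \<in> g \<and> q \<in> g \<and> p \<in> h \<and> q \<in> h)"

text \<open>The image plane is taken with point type 'p and line type 'p set; this is
  no loss of generality, since image points (lines) correspond bijectively to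
  neighbour classes of points (lines), which inject into 'p ('p set).\<close>
definition PH_plane :: "'p set \<Rightarrow> 'p set set \<Rightarrow> bool" where
  "PH_plane X L \<longleftrightarrow>
     (\<forall>g\<in>L. g \<subseteq> X) \<and>
     (\<forall>p\<in>X. \<forall>q\<in>X. \<exists>g\<in>L. p \<in> g \<and> q \<in> g) \<and>
     (\<forall>g\<in>L. \<forall>h\<in>L. g \<inter> h \<noteq> {}) \<and>
     (\<exists>(X' :: 'p set) (L' :: 'p set set) (inc' :: 'p \<Rightarrow> 'p set \<Rightarrow> bool)
        (\<phi> :: 'p \<Rightarrow> 'p) (\<psi> :: 'p set \<Rightarrow> 'p set).
        projective_plane X' L' inc' \<and> \<phi> ` X = X' \<and> \<psi> ` L = L' \<and>
        (\<forall>p\<in>X. \<forall>g\<in>L. p \<in> g \<longrightarrow> inc' (\<phi> p) (\<psi> g)) \<and>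
        (\<forall>p\<in>X. \<forall>q\<in>X. \<phi> p = \<phi> q \<longleftrightarrow> pt_nb L p q) \<and>
        (\<forall>g\<in>L. \<forall>h\<in>L. \<psi> g = \<psi> h \<longleftrightarrow> ln_nb g h))"

definition tr_PH_plane :: "'p set \<Rightarrow> 'p set set \<Rightarrow> nat \<Rightarrow> nat \<Rightarrow> bool" where
  "tr_PH_plane X L t r \<longleftrightarrow>
     PH_plane X L \<and>
     (\<forall>g\<in>L. finite g \<and> card g = t * (r + 1)) \<and>
     (\<forall>g\<in>L. \<forall>p\<in>g. card {q\<in>g. pt_nb L p q} = t)"

definition AH_plane :: "'p set \<Rightarrow> 'p set set \<Rightarrow> bool" where
  "AH_plane X L \<longleftrightarrow>
     (\<forall>g\<in>L. g \<subseteq> X) \<and>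
     (\<forall>p\<in>X. \<forall>q\<in>X. \<exists>g\<in>L. p \<in> g \<and> q \<in> g) \<and>
     (\<exists>(X' :: 'p set) (L' :: 'p set set) (inc' :: 'p \<Rightarrow> 'p set \<Rightarrow> bool)
        (\<phi> :: 'p \<Rightarrow> 'p) (\<psi> :: 'p set \<Rightarrow> 'p set).
        affine_plane X' L' inc' \<and> \<phi> ` X = X' \<and> \<psi> ` L = L' \<and>
        (\<forall>p\<in>X. \<forall>g\<in>L. p \<in> g \<longrightarrow> inc' (\<phi> p) (\<psi> g)) \<and>
        (\<forall>p\<in>X. \<forall>q\<in>X. \<phi> p = \<phi> q \<longleftrightarrow> pt_nb L p q) \<and>
        (\<forall>g\<in>L. \<forall>h\<in>L. \<psi> g = \<psi> h \<longleftrightarrow> ln_nb g h) \<and>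
        (\<forall>g\<in>L. \<forall>h\<in>L. g \<inter> h = {} \<longrightarrow> parallel_lines X' inc' (\<psi> g) (\<psi> h)))"

definition nbhd_pts :: "'p set \<Rightarrow> 'p set set \<Rightarrow> 'p \<Rightarrow> 'p set" where
  "nbhd_pts X L p = {q\<in>X. pt_nb L p q}"

definition nbhd_lines :: "'p set \<Rightarrow> 'p set set \<Rightarrow> 'p \<Rightarrow> 'p set set" where
  "nbhd_lines X L p = {g \<inter> nbhd_pts X L p | g. g \<in> L \<and> g \<inter> nbhd_pts X L p \<noteq> {}}"

definition restriction_count_const :: "'p set \<Rightarrow> 'p set set \<Rightarrow> 'p \<Rightarrow> bool" where
  "restriction_count_const X L p \<longleftrightarrow>
     (\<exists>c. \<forall>g'\<in>nbhd_lines X L p. card {g\<in>L. g \<inter> nbhd_pts X L p = g'} = c)"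

fun uniform_AH :: "nat \<Rightarrow> 'p set \<Rightarrow> 'p set set \<Rightarrow> bool" where
  "uniform_AH 0 X L = False"
| "uniform_AH (Suc 0) X L = ((\<forall>g\<in>L. g \<subseteq> X) \<and> affine_plane X L (\<in>))"
| "uniform_AH (Suc (Suc n)) X L =
     (AH_plane X L \<and>
      (\<forall>p\<in>X. uniform_AH (Suc n) (nbhd_pts X L p) (nbhd_lines X L p) \<and>
              restriction_count_const X L p))"

fun uniform_PH :: "nat \<Rightarrow> 'p set \<Rightarrow> 'p set set \<Rightarrow> bool" where
  "uniform_PH 0 X L = False"
| "uniform_PH (Suc 0) X L = ((\<forall>g\<in>L. g \<subseteq> X) \<and> projective_plane X L (\<in>))"
| "uniform_PH (Suc (Suc n)) X L =
     (PH_plane X L \<and>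
      (\<forall>p\<in>X. uniform_AH (Suc n) (nbhd_pts X L p) (nbhd_lines X L p) \<and>
              restriction_count_const X L p))"

end

theory Submission
  imports Defs
begin

text \<open>The points of H over a point P of the projective plane form the affine plane A_P, and the
  line of H given by row r of the array of l meets this fibre, for P on l, in the affine line
  \<beta> P l (O_l(r,P)). Two points of H are neighbours iff they lie in the same fibre: two points of
  one fibre lie on the m lines of H coming from the rows of O_l with a prescribed entry in column
  P, while points in different fibres determine l and two entries of the row, hence the row. Two
  lines of H are neighbours iff they come from the same line l: any two rows of an OA(2,m+1,m)
  agree in some column, which gives a whole affine line in common, whereas lines coming from
  different lines of the projective plane meet in the single point where their slices, lying in
  different parallel classes, intersect.\<close>

lemma ex1_image_iff:
  assumes "inj_on f A"
  shows "(\<exists>!y. y \<in> f ` A \<and> Q y) \<longleftrightarrow> (\<exists>!x. x \<in> A \<and> Q (f x))"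
  using assms by (auto simp: inj_on_eq_iff) (metis imageI inj_on_eq_iff)+

lemma inj_Pair: "inj (Pair a)"
  by (rule injI) simp

lemma projective_plane_relabel:
  assumes "projective_plane P L inc" and "inj_on f P" and "inj_on h L"
    and "\<And>p l. p \<in> P \<Longrightarrow> l \<in> L \<Longrightarrow> inc' (f p) (h l) \<longleftrightarrow> inc p l"
  shows "projective_plane (f ` P) (h ` L) inc'"
proof -
  have "(\<exists>!l. l \<in> h ` L \<and> inc' (f p) l \<and> inc' (f q) l) \<longleftrightarrow> (\<exists>!l. l \<in> L \<and> inc p l \<and> inc q l)"
    if "p \<in> P" "q \<in> P" for p q
    using assms(3,4) that by (simp add: ex1_image_iff cong: conj_cong)
  moreover have "(\<exists>!p. p \<in> f ` P \<and> inc' p (h l) \<and> inc' p (h k)) \<longleftrightarrow> (\<exists>!p. p \<in> P \<and> inc p l \<and> inc p k)"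
    if "l \<in> L" "k \<in> L" for l k
    using assms(2,4) that by (simp add: ex1_image_iff cong: conj_cong)
  moreover have "distinct [f a, f b, f c, f d] \<longleftrightarrow> distinct [a, b, c, d]"
    if "a \<in> P" "b \<in> P" "c \<in> P" "d \<in> P" for a b c d
    using assms(2) that by (auto simp: inj_on_eq_iff)
  ultimately show ?thesis
    using assms(1,4) unfolding projective_plane_def
    by (simp add: inj_on_eq_iff[OF assms(2)] inj_on_eq_iff[OF assms(3)])
qed

lemma affine_plane_relabel:
  assumes "affine_plane P L inc" and "inj_on f P" and "inj_on h L"
    and "\<And>p l. p \<in> P \<Longrightarrow> l \<in> L \<Longrightarrow> inc' (f p) (h l) \<longleftrightarrow> inc p l"
  shows "affine_plane (f ` P) (h ` L) inc'"
proof -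
  have "(\<exists>!l. l \<in> h ` L \<and> inc' (f p) l \<and> inc' (f q) l) \<longleftrightarrow> (\<exists>!l. l \<in> L \<and> inc p l \<and> inc q l)"
    if "p \<in> P" "q \<in> P" for p q
    using assms(3,4) that by (simp add: ex1_image_iff cong: conj_cong)
  moreover have "(\<exists>!k. k \<in> h ` L \<and> inc' (f p) k \<and> \<not> (\<exists>q\<in>f ` P. inc' q (h l) \<and> inc' q k))
      \<longleftrightarrow> (\<exists>!k. k \<in> L \<and> inc p k \<and> \<not> (\<exists>q\<in>P. inc q l \<and> inc q k))"
    if "p \<in> P" "l \<in> L" for p l
    using assms(3,4) that by (simp add: ex1_image_iff cong: conj_cong)
  ultimately show ?thesis
    using assms(1,4) unfolding affine_plane_def
    by (simp add: inj_on_eq_iff[OF assms(2)])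
qed

locale affine_plane_order =
  fixes Y :: "'x set" and A :: "'x set set" and m :: nat
  assumes of_order: "affine_plane_of_order Y A m" and order_ge2: "2 \<le> m"
begin

lemma affine_plane: "affine_plane Y A (\<in>)"
  using of_order by (simp add: affine_plane_of_order_def)

lemma line_subset: "g \<in> A \<Longrightarrow> g \<subseteq> Y"
  using of_order by (simp add: affine_plane_of_order_def)

lemma card_line: "g \<in> A \<Longrightarrow> card g = m"
  using of_order by (simp add: affine_plane_of_order_def)

lemma finite_line: "g \<in> A \<Longrightarrow> finite g"
  using card_line order_ge2 card.infinite by fastforce

lemma points_nonempty: "Y \<noteq> {}"
  using of_order order_ge2 by (auto simp: affine_plane_of_order_def)

lemma line_two_points:
  assumes "g \<in> A" obtains x y where "x \<in> g" "y \<in> g" "x \<noteq> y"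
proof -
  have "\<not> card g \<le> Suc 0" using card_line[OF assms] order_ge2 by simp
  then show thesis using that card_le_Suc0_iff_eq[OF finite_line[OF assms]] by blast
qed

lemma line_nonempty: "g \<in> A \<Longrightarrow> g \<noteq> {}"
  by (metis line_two_points empty_iff)

lemma ex1_line: "x \<in> Y \<Longrightarrow> y \<in> Y \<Longrightarrow> x \<noteq> y \<Longrightarrow> \<exists>!g. g \<in> A \<and> x \<in> g \<and> y \<in> g"
  using affine_plane by (simp add: affine_plane_def)

lemma line_unique:
  assumes "x \<in> g" "y \<in> g" "x \<in> h" "y \<in> h" "x \<noteq> y" and g: "g \<in> A" and h: "h \<in> A"
  shows "g = h"
proof -
  have "x \<in> Y" "y \<in> Y" using assms(1,2) line_subset[OF g] by blast+
  from ex1_line[OF this \<open>x \<noteq> y\<close>] show ?thesis using assms by blast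
qed

lemma ex1_parallel:
  assumes "g \<in> A" "x \<in> Y" "x \<notin> g"
  shows "\<exists>!k. k \<in> A \<and> x \<in> k \<and> g \<inter> k = {}"
proof -
  have "\<forall>l\<in>A. \<forall>p\<in>Y. p \<notin> l \<longrightarrow> (\<exists>!k. k \<in> A \<and> p \<in> k \<and> \<not> (\<exists>q\<in>Y. q \<in> l \<and> q \<in> k))"
    using affine_plane unfolding affine_plane_def by (rule conjunct1[OF conjunct2])
  then have "\<exists>!k. k \<in> A \<and> x \<in> k \<and> \<not> (\<exists>q\<in>Y. q \<in> g \<and> q \<in> k)"
    using assms by blast
  moreover have "(\<not> (\<exists>q\<in>Y. q \<in> g \<and> q \<in> k)) \<longleftrightarrow> g \<inter> k = {}" for k
    using line_subset[OF assms(1)] by blast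
  ultimately show ?thesis by simp
qed

lemma parallel_classes_subset: "C \<in> parallel_classes Y A \<Longrightarrow> C \<subseteq> A"
  by (simp add: parallel_classes_def)

lemma parallel_class_disjoint:
  "\<lbrakk>C \<in> parallel_classes Y A; g \<in> C; h \<in> C; g \<noteq> h\<rbrakk> \<Longrightarrow> g \<inter> h = {}"
  by (simp add: parallel_classes_def)

lemma parallel_class_covers: "\<lbrakk>C \<in> parallel_classes Y A; x \<in> Y\<rbrakk> \<Longrightarrow> \<exists>g\<in>C. x \<in> g"
  by (auto simp: parallel_classes_def)

definition parallel_class_of :: "'x set \<Rightarrow> 'x set set" where
  "parallel_class_of g = {h \<in> A. h = g \<or> g \<inter> h = {}}"

lemma parallel_class_of_in:
  assumes g: "g \<in> A" shows "parallel_class_of g \<in> parallel_classes Y A"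
proof -
  have disjoint: "h \<inter> k = {}"
    if h: "h \<in> parallel_class_of g" and k: "k \<in> parallel_class_of g" and "h \<noteq> k" for h k
  proof (rule ccontr)
    assume "h \<inter> k \<noteq> {}"
    then obtain x where x: "x \<in> h" "x \<in> k" by blast
    have hA: "h \<in> A" and kA: "k \<in> A" using h k by (simp_all add: parallel_class_of_def)
    have gh: "g \<inter> h = {}" and gk: "g \<inter> k = {}"
      using h k \<open>h \<noteq> k\<close> x by (auto simp: parallel_class_of_def)
    have "x \<in> Y" using x hA line_subset by blast
    moreover have "x \<notin> g" using gh x by blast
    ultimately have "h = k" using ex1_parallel[OF g] hA kA x gh gk by blast
    with \<open>h \<noteq> k\<close> show False ..
  qed
  have cover: "x \<in> \<Union>(parallel_class_of g)" if "x \<in> Y" for x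
  proof (cases "x \<in> g")
    case False
    then obtain k where "k \<in> A" "x \<in> k" "g \<inter> k = {}" using ex1_parallel[OF g \<open>x \<in> Y\<close>] by blast
    then show ?thesis by (auto simp: parallel_class_of_def)
  qed (use g in \<open>auto simp: parallel_class_of_def\<close>)
  have "parallel_class_of g \<subseteq> A" by (simp add: parallel_class_of_def)
  moreover have "\<Union>(parallel_class_of g) = Y" using cover \<open>parallel_class_of g \<subseteq> A\<close> line_subset by blast
  ultimately show ?thesis using disjoint by (simp add: parallel_classes_def)
qed

lemma parallel_class_eq:
  assumes C: "C \<in> parallel_classes Y A" and g: "g \<in> C"
  shows "C = parallel_class_of g"
proof
  show "C \<subseteq> parallel_class_of g"
    using parallel_class_disjoint[OF C g] parallel_classes_subset[OF C]
    unfolding parallel_class_of_def by blast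
next
  show "parallel_class_of g \<subseteq> C"
  proof
    fix k assume k: "k \<in> parallel_class_of g"
    show "k \<in> C"
    proof (cases "k = g")
      case False
      then have kA: "k \<in> A" and gk: "g \<inter> k = {}" using k by (auto simp: parallel_class_of_def)
      obtain x where x: "x \<in> k" using line_nonempty[OF kA] by blast
      then have xY: "x \<in> Y" and xg: "x \<notin> g" using gk line_subset[OF kA] by blast+
      obtain h where h: "h \<in> C" "x \<in> h" using parallel_class_covers[OF C xY] by blast
      have "g \<inter> h = {}" using parallel_class_disjoint[OF C g h(1)] h(2) xg by blast
      then have "h = k"
        using ex1_parallel[of g x] parallel_classes_subset[OF C] g h xY xg kA x gk by blast
      then show ?thesis using h by simp
    qed (use g in simp)
  qed
qed

lemma ex_parallel_class:
  assumes "g \<in> A" shows "\<exists>C\<in>parallel_classes Y A. g \<in> C"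
proof
  show "g \<in> parallel_class_of g" using assms by (simp add: parallel_class_of_def)
qed (rule parallel_class_of_in[OF assms])

lemma parallel_class_unique:
  "\<lbrakk>C \<in> parallel_classes Y A; C' \<in> parallel_classes Y A; g \<in> C; g \<in> C'\<rbrakk> \<Longrightarrow> C = C'"
  using parallel_class_eq[of C g] parallel_class_eq[of C' g] by simp

lemma ex1_meet:
  assumes C: "C \<in> parallel_classes Y A" and C': "C' \<in> parallel_classes Y A" and "C \<noteq> C'"
    and g: "g \<in> C" and h: "h \<in> C'"
  shows "\<exists>!x. x \<in> g \<and> x \<in> h"
proof -
  have gA: "g \<in> A" using parallel_classes_subset[OF C] g by blast
  have hA: "h \<in> A" using parallel_classes_subset[OF C'] h by blast
  have "g \<noteq> h"
  proof
    assume "g = h"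
    then show False using parallel_class_unique[OF C C' g] h \<open>C \<noteq> C'\<close> by simp
  qed
  have "g \<inter> h \<noteq> {}"
  proof
    assume "g \<inter> h = {}"
    then have "h \<in> parallel_class_of g" using hA by (simp add: parallel_class_of_def)
    then have "h \<in> C" using parallel_class_eq[OF C g] by simp
    then show False using parallel_class_unique[OF C C' _ h] \<open>C \<noteq> C'\<close> by simp
  qed
  then obtain x where x: "x \<in> g" "x \<in> h" by blast
  show ?thesis
  proof (rule ex1I[of _ x])
    fix y assume "y \<in> g \<and> y \<in> h"
    then show "y = x" using line_unique[of y g x h] x gA hA \<open>g \<noteq> h\<close> by blast
  qed (use x in simp)
qed

end

locale orthogonal_array =
  fixes R :: "'r set" and C :: "'c set" and S :: "'s set" and A :: "'r \<Rightarrow> 'c \<Rightarrow> 's" and v :: nat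
  assumes OA: "OA2 R C S A v"
begin

lemma finite_rows: "finite R"
  using OA by (simp add: OA2_def)

lemma card_rows: "card R = v\<^sup>2"
  using OA by (simp add: OA2_def)

lemma card_symbols: "card S = v"
  using OA by (simp add: OA2_def)

lemma entry_in: "r \<in> R \<Longrightarrow> c \<in> C \<Longrightarrow> A r c \<in> S"
  using OA by (simp add: OA2_def)

lemma ex1_row:
  assumes "c1 \<in> C" "c2 \<in> C" "c1 \<noteq> c2" "s1 \<in> S" "s2 \<in> S"
  shows "\<exists>!r. r \<in> R \<and> A r c1 = s1 \<and> A r c2 = s2"
proof -
  have "\<forall>c1\<in>C. \<forall>c2\<in>C. c1 \<noteq> c2 \<longrightarrow> (\<forall>s1\<in>S. \<forall>s2\<in>S. \<exists>!r. r \<in> R \<and> A r c1 = s1 \<and> A r c2 = s2)"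
    using OA by (simp add: OA2_def)
  then show ?thesis using assms by blast
qed

lemma row_eqI:
  assumes "c1 \<in> C" "c2 \<in> C" "c1 \<noteq> c2" "r \<in> R" "r' \<in> R"
    and "A r c1 = A r' c1" "A r c2 = A r' c2"
  shows "r = r'"
  using ex1_row[OF assms(1-3) entry_in[OF assms(4,1)] entry_in[OF assms(4,2)]] assms(4-7)
  by auto

lemma card_rows_with_entry:
  assumes c: "c \<in> C" and c': "c' \<in> C" "c \<noteq> c'" and s: "s \<in> S"
  shows "card {r \<in> R. A r c = s} = v"
proof -
  have "bij_betw (\<lambda>r. A r c') {r \<in> R. A r c = s} S"
  proof (rule bij_betw_imageI)
    show "inj_on (\<lambda>r. A r c') {r \<in> R. A r c = s}"
      using row_eqI[OF c c'] by (auto intro!: inj_onI)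
    show "(\<lambda>r. A r c') ` {r \<in> R. A r c = s} = S"
    proof
      show "(\<lambda>r. A r c') ` {r \<in> R. A r c = s} \<subseteq> S" using entry_in c' by blast
      show "S \<subseteq> (\<lambda>r. A r c') ` {r \<in> R. A r c = s}"
      proof
        fix t assume "t \<in> S"
        then obtain r where "r \<in> R" "A r c = s" "A r c' = t"
          using ex1_row[OF c c' s] by blast
        then show "t \<in> (\<lambda>r. A r c') ` {r \<in> R. A r c = s}" by force
      qed
    qed
  qed
  then show ?thesis using card_symbols bij_betw_same_card by metis
qed

text \<open>Fixing a row r, every column contributes v - 1 further rows agreeing with r there, and
  these sets are disjoint; with v + 1 columns they exhaust the v^2 - 1 rows other than r.\<close>
lemma rows_agree_somewhere:
  assumes C: "finite C" "card C = v + 1" and r: "r \<in> R" and r': "r' \<in> R"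
  shows "\<exists>c\<in>C. A r c = A r' c"
proof (cases "r' = r")
  case True
  then show ?thesis using C by (metis add_is_0 card.empty equals0I one_neq_zero)
next
  case False
  have "v \<noteq> 0" using r card_rows finite_rows card_0_eq by fastforce
  define T where "T c = {q \<in> R - {r}. A q c = A r c}" for c
  have card_T: "card (T c) = v - 1" if c: "c \<in> C" for c
  proof -
    have "card (C - {c}) = v" using C c by simp
    then have "C - {c} \<noteq> {}" using \<open>v \<noteq> 0\<close> by (metis card.empty)
    then obtain c' where "c' \<in> C" "c \<noteq> c'" by blast
    then have "card {q \<in> R. A q c = A r c} = v"
      using card_rows_with_entry[OF c] entry_in[OF r c] by blast
    moreover have "T c = {q \<in> R. A q c = A r c} - {r}" by (auto simp: T_def)
    ultimately show ?thesis using r finite_rows by simp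
  qed
  have disjoint: "T c \<inter> T c' = {}" if "c \<in> C" "c' \<in> C" "c \<noteq> c'" for c c'
    using row_eqI[OF that _ r] by (auto simp: T_def)
  have "card (\<Union>c\<in>C. T c) = (\<Sum>c\<in>C. card (T c))"
    using disjoint finite_rows C(1) by (intro card_UN_disjoint) (auto simp: T_def)
  also have "\<dots> = (v + 1) * (v - 1)" using card_T C(2) by simp
  also have "\<dots> = card (R - {r})" using card_rows r finite_rows by (simp add: power2_eq_square algebra_simps)
  finally have "(\<Union>c\<in>C. T c) = R - {r}"
    using finite_rows by (intro card_subset_eq) (auto simp: T_def)
  then have "r' \<in> (\<Union>c\<in>C. T c)" using r' False by blast
  then show ?thesis by (force simp: T_def)
qed

end

lemma projective_plane_ex1_line:
  "\<lbrakk>projective_plane P L inc; p \<in> P; q \<in> P; p \<noteq> q\<rbrakk> \<Longrightarrow> \<exists>!l. l \<in> L \<and> inc p l \<and> inc q l"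
  by (simp add: projective_plane_def)

lemma projective_plane_ex1_point:
  "\<lbrakk>projective_plane P L inc; l \<in> L; k \<in> L; l \<noteq> k\<rbrakk> \<Longrightarrow> \<exists>!p. p \<in> P \<and> inc p l \<and> inc p k"
  by (simp add: projective_plane_def)

locale hjelmslev_construction =
  fixes m :: nat
    and Pts :: "'a set" and Lns :: "'b set" and inc :: "'a \<Rightarrow> 'b \<Rightarrow> bool"
    and X :: "'a \<Rightarrow> 'x set" and AL :: "'a \<Rightarrow> 'x set set"
    and R :: "'b \<Rightarrow> 'r set" and S :: "'b \<Rightarrow> 's set" and Arr :: "'b \<Rightarrow> 'r \<Rightarrow> 'a \<Rightarrow> 's"
    and \<pi> :: "'a \<Rightarrow> 'b \<Rightarrow> 'x set set" and \<beta> :: "'a \<Rightarrow> 'b \<Rightarrow> 's \<Rightarrow> 'x set"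
  assumes order_ge2: "2 \<le> m"
    and projective: "projective_plane_of_order Pts Lns inc m"
    and affine: "\<forall>P\<in>Pts. affine_plane_of_order (X P) (AL P) m"
    and arrays: "\<forall>l\<in>Lns. OA2 (R l) {P\<in>Pts. inc P l} (S l) (Arr l) m"
    and class_bij: "\<forall>P\<in>Pts. bij_betw (\<pi> P) {l\<in>Lns. inc P l} (parallel_classes (X P) (AL P))"
    and slice_bij: "\<forall>P\<in>Pts. \<forall>l\<in>Lns. inc P l \<longrightarrow> bij_betw (\<beta> P l) (S l) (\<pi> P l)"
begin

abbreviation "points_on l \<equiv> {P\<in>Pts. inc P l}"
abbreviation "HPts \<equiv> H_points Pts X"
abbreviation "HLns \<equiv> H_lines Pts Lns inc R \<beta> Arr"
abbreviation "hline \<equiv> H_line Pts inc \<beta> Arr"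
abbreviation "slice l r P \<equiv> \<beta> P l (Arr l r P)"

lemma fibre_affine: "P \<in> Pts \<Longrightarrow> affine_plane_order (X P) (AL P) m"
  using affine order_ge2 by (simp add: affine_plane_order_def)

lemma line_array: "l \<in> Lns \<Longrightarrow> orthogonal_array (R l) (points_on l) (S l) (Arr l) m"
  using arrays by (simp add: orthogonal_array_def)

lemma projective_plane: "projective_plane Pts Lns inc"
  using projective by (simp add: projective_plane_of_order_def)

lemma card_points_on: "l \<in> Lns \<Longrightarrow> card (points_on l) = m + 1"
  using projective by (simp add: projective_plane_of_order_def)

lemma finite_points_on: "l \<in> Lns \<Longrightarrow> finite (points_on l)"
  using card_points_on card.infinite by (metis add_is_0 one_neq_zero)

lemma two_points_on_line:
  assumes "l \<in> Lns" obtains P Q where "P \<in> points_on l" "Q \<in> points_on l" "P \<noteq> Q"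
proof -
  have "\<not> card (points_on l) \<le> Suc 0" using card_points_on[OF assms] order_ge2 by simp
  then show thesis using that card_le_Suc0_iff_eq[OF finite_points_on[OF assms]] by blast
qed

lemma ex_line_through:
  assumes "P \<in> Pts" shows "\<exists>l\<in>Lns. inc P l"
proof -
  have "card {l \<in> Lns. inc P l} = m + 1"
    using projective assms by (simp add: projective_plane_of_order_def)
  then have "{l \<in> Lns. inc P l} \<noteq> {}" by (metis card.empty add_is_0 one_neq_zero)
  then show ?thesis by blast
qed

lemma join_unique:
  assumes "P \<in> Pts" "Q \<in> Pts" "P \<noteq> Q" "l \<in> Lns" "l' \<in> Lns"
    and "inc P l" "inc Q l" "inc P l'" "inc Q l'"
  shows "l = l'"
  using projective_plane_ex1_line[OF projective_plane assms(1-3)] assms(4-) by blast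

lemma meet_unique:
  assumes "l \<in> Lns" "l' \<in> Lns" "l \<noteq> l'" "P \<in> Pts" "Q \<in> Pts"
    and "inc P l" "inc P l'" "inc Q l" "inc Q l'"
  shows "P = Q"
  using projective_plane_ex1_point[OF projective_plane assms(1-3)] assms(4-) by blast

lemma class_bij_at: "P \<in> Pts \<Longrightarrow> bij_betw (\<pi> P) {l \<in> Lns. inc P l} (parallel_classes (X P) (AL P))"
  using class_bij by blast

lemma slice_bij_at: "\<lbrakk>P \<in> Pts; l \<in> Lns; inc P l\<rbrakk> \<Longrightarrow> bij_betw (\<beta> P l) (S l) (\<pi> P l)"
  using slice_bij by blast

lemma class_of_line:
  "\<lbrakk>P \<in> Pts; l \<in> Lns; inc P l\<rbrakk> \<Longrightarrow> \<pi> P l \<in> parallel_classes (X P) (AL P)"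
  using bij_betwE[OF class_bij_at] by blast

lemma class_of_line_inj:
  assumes "P \<in> Pts" "l \<in> Lns" "l' \<in> Lns" "inc P l" "inc P l'" "\<pi> P l = \<pi> P l'"
  shows "l = l'"
  using inj_onD[OF bij_betw_imp_inj_on[OF class_bij_at[OF assms(1)]] assms(6)] assms(2-5) by simp

lemma slice_in_class:
  "\<lbrakk>P \<in> Pts; l \<in> Lns; inc P l; s \<in> S l\<rbrakk> \<Longrightarrow> \<beta> P l s \<in> \<pi> P l"
  using bij_betwE[OF slice_bij_at] by blast

lemma slice_image: "\<lbrakk>P \<in> Pts; l \<in> Lns; inc P l\<rbrakk> \<Longrightarrow> \<beta> P l ` S l = \<pi> P l"
  using bij_betw_imp_surj_on[OF slice_bij_at] by blast

lemma slice_line: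
  "\<lbrakk>P \<in> Pts; l \<in> Lns; inc P l; s \<in> S l\<rbrakk> \<Longrightarrow> \<beta> P l s \<in> AL P"
  using affine_plane_order.parallel_classes_subset[OF fibre_affine class_of_line] slice_in_class
  by blast

lemma slice_eqI:
  assumes P: "P \<in> Pts" and l: "l \<in> Lns" "inc P l" and s: "s \<in> S l" "s' \<in> S l"
    and "x \<in> \<beta> P l s" "x \<in> \<beta> P l s'"
  shows "s = s'"
proof -
  have "\<beta> P l s = \<beta> P l s'"
    using affine_plane_order.parallel_class_disjoint[OF fibre_affine[OF P] class_of_line[OF P l]
        slice_in_class[OF P l s(1)] slice_in_class[OF P l s(2)]] assms(6,7)
    by blast
  then show ?thesis using inj_onD[OF bij_betw_imp_inj_on[OF slice_bij_at[OF P l]]] s by blast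
qed

lemma slice_inj:
  assumes P: "P \<in> Pts" and l: "l \<in> Lns" "inc P l" and l': "l' \<in> Lns" "inc P l'"
    and s: "s \<in> S l" and s': "s' \<in> S l'" and eq: "\<beta> P l s = \<beta> P l' s'"
  shows "l = l' \<and> s = s'"
proof -
  have "\<pi> P l = \<pi> P l'"
    using affine_plane_order.parallel_class_unique[OF fibre_affine[OF P] class_of_line[OF P l]
        class_of_line[OF P l'] slice_in_class[OF P l s]] slice_in_class[OF P l' s'] eq
    by simp
  then have "l = l'" using class_of_line_inj P l l' by blast
  moreover have "s = s'"
    using inj_onD[OF bij_betw_imp_inj_on[OF slice_bij_at[OF P l]]] calculation s s' eq by blast
  ultimately show ?thesis ..
qed

lemma ex_slice_containing:
  assumes P: "P \<in> Pts" and l: "l \<in> Lns" "inc P l" and x: "x \<in> X P"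
  shows "\<exists>s\<in>S l. x \<in> \<beta> P l s"
proof -
  obtain a where "a \<in> \<pi> P l" "x \<in> a"
    using affine_plane_order.parallel_class_covers[OF fibre_affine[OF P] class_of_line[OF P l] x]
    by blast
  then show ?thesis using slice_image[OF P l] by blast
qed

lemma line_is_slice:
  assumes P: "P \<in> Pts" and a: "a \<in> AL P"
  obtains l s where "l \<in> Lns" "inc P l" "s \<in> S l" "\<beta> P l s = a"
proof -
  obtain C where C: "C \<in> parallel_classes (X P) (AL P)" "a \<in> C"
    using affine_plane_order.ex_parallel_class[OF fibre_affine[OF P] a] by blast
  then have "C \<in> \<pi> P ` {l \<in> Lns. inc P l}"
    using bij_betw_imp_surj_on[OF class_bij_at[OF P]] by simp
  then obtain l where l: "l \<in> Lns" "inc P l" "\<pi> P l = C" by blast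
  then have "a \<in> \<beta> P l ` S l" using C(2) slice_image[OF P l(1,2)] by simp
  then show thesis using that l(1,2) by blast
qed

lemma ex1_slices_meet:
  assumes P: "P \<in> Pts" and l: "l \<in> Lns" "inc P l" and l': "l' \<in> Lns" "inc P l'" "l \<noteq> l'"
    and s: "s \<in> S l" and s': "s' \<in> S l'"
  shows "\<exists>!x. x \<in> \<beta> P l s \<and> x \<in> \<beta> P l' s'"
proof -
  have "\<pi> P l \<noteq> \<pi> P l'" using class_of_line_inj P l l' by blast
  then show ?thesis
    by (rule affine_plane_order.ex1_meet[OF fibre_affine[OF P] class_of_line[OF P l]
          class_of_line[OF P l'(1,2)] _ slice_in_class[OF P l s] slice_in_class[OF P l'(1,2) s']])
qed

lemma mem_hline [simp]: "(P, x) \<in> hline l r \<longleftrightarrow> P \<in> Pts \<and> inc P l \<and> x \<in> slice l r P"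
  by (simp add: H_line_def)

lemma mem_HPts [simp]: "(P, x) \<in> HPts \<longleftrightarrow> P \<in> Pts \<and> x \<in> X P"
  by (simp add: H_points_def)

lemma HLns_iff: "g \<in> HLns \<longleftrightarrow> (\<exists>l\<in>Lns. \<exists>r\<in>R l. g = hline l r)"
  by (auto simp: H_lines_def)

lemma HLnsE:
  assumes "g \<in> HLns" obtains l r where "l \<in> Lns" "r \<in> R l" "g = hline l r"
  using assms unfolding HLns_iff by blast

lemma hline_in_HLns: "\<lbrakk>l \<in> Lns; r \<in> R l\<rbrakk> \<Longrightarrow> hline l r \<in> HLns"
  unfolding HLns_iff by blast

lemma array_entry_in: "\<lbrakk>l \<in> Lns; r \<in> R l; P \<in> Pts; inc P l\<rbrakk> \<Longrightarrow> Arr l r P \<in> S l"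
  using orthogonal_array.entry_in[OF line_array] by blast

lemma slice_line_of_row: "\<lbrakk>l \<in> Lns; r \<in> R l; P \<in> Pts; inc P l\<rbrakk> \<Longrightarrow> slice l r P \<in> AL P"
  using slice_line array_entry_in by blast

lemma slice_subset: "\<lbrakk>l \<in> Lns; r \<in> R l; P \<in> Pts; inc P l\<rbrakk> \<Longrightarrow> slice l r P \<subseteq> X P"
  using affine_plane_order.line_subset[OF fibre_affine slice_line_of_row] by blast

lemma card_slice: "\<lbrakk>l \<in> Lns; r \<in> R l; P \<in> Pts; inc P l\<rbrakk> \<Longrightarrow> card (slice l r P) = m"
  using affine_plane_order.card_line[OF fibre_affine slice_line_of_row] by blast

lemma finite_slice: "\<lbrakk>l \<in> Lns; r \<in> R l; P \<in> Pts; inc P l\<rbrakk> \<Longrightarrow> finite (slice l r P)"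
  using affine_plane_order.finite_line[OF fibre_affine slice_line_of_row] by blast

lemma slice_nonempty: "\<lbrakk>l \<in> Lns; r \<in> R l; P \<in> Pts; inc P l\<rbrakk> \<Longrightarrow> \<exists>x. x \<in> slice l r P"
  using affine_plane_order.line_nonempty[OF fibre_affine slice_line_of_row] by blast

lemma hline_subset: "\<lbrakk>l \<in> Lns; r \<in> R l\<rbrakk> \<Longrightarrow> hline l r \<subseteq> HPts"
  using slice_subset by fastforce

lemma hline_fibre:
  assumes "l \<in> Lns" "r \<in> R l" "P \<in> Pts"
  shows "hline l r \<inter> Pair P ` X P = (if inc P l then Pair P ` slice l r P else {})"
  using slice_subset[OF assms] assms(3) by auto

lemma ex_point_over:
  assumes "l \<in> Lns" "r \<in> R l" "P \<in> Pts"
  shows "(\<exists>x. (P, x) \<in> hline l r) \<longleftrightarrow> inc P l"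
  using slice_nonempty[OF assms] assms(3) by auto

lemma card_rows_through:
  assumes l: "l \<in> Lns" and P: "P \<in> points_on l" and s: "s \<in> S l"
  shows "card {r \<in> R l. Arr l r P = s} = m"
proof -
  obtain Q where "Q \<in> points_on l" "P \<noteq> Q"
    using two_points_on_line[OF l] by metis
  then show ?thesis
    using orthogonal_array.card_rows_with_entry[OF line_array[OF l] P] s by blast
qed

lemma hline_inj:
  assumes l: "l \<in> Lns" "r \<in> R l" and l': "l' \<in> Lns" "r' \<in> R l'" and eq: "hline l r = hline l' r'"
  shows "l = l' \<and> r = r'"
proof -
  obtain P Q where PQ: "P \<in> points_on l" "Q \<in> points_on l" "P \<noteq> Q"
    using two_points_on_line[OF l(1)] by blast
  have "inc P l'" "inc Q l'"
    using ex_point_over[OF l] ex_point_over[OF l'] PQ eq by blast+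
  then have ll: "l = l'" using join_unique[of P Q l l'] PQ l l' by blast
  have "Arr l r P = Arr l r' P" if P: "P \<in> points_on l" for P
  proof -
    obtain x where x: "x \<in> slice l r P" using slice_nonempty[OF l] P by blast
    then have "(P, x) \<in> hline l' r'" using eq P by (simp flip: eq)
    then have "x \<in> \<beta> P l (Arr l r' P)" using ll by simp
    then show ?thesis
      using slice_eqI[of P l "Arr l r P" "Arr l r' P" x] x P l l' ll array_entry_in by force
  qed
  then have "r = r'"
    using orthogonal_array.row_eqI[OF line_array[OF l(1)] PQ l(2)] l'(2) ll PQ by blast
  with ll show ?thesis ..
qed

lemma two_hlines_through_fibre_points:
  assumes P: "P \<in> Pts" and xy: "x \<in> X P" "y \<in> X P" "x \<noteq> y"
  obtains g h where "g \<in> HLns" "h \<in> HLns" "g \<noteq> h"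
    "(P, x) \<in> g" "(P, y) \<in> g" "(P, x) \<in> h" "(P, y) \<in> h"
proof -
  obtain a where a: "a \<in> AL P" "x \<in> a" "y \<in> a"
    using ex1_implies_ex[OF affine_plane_order.ex1_line[OF fibre_affine[OF P] xy]] by blast
  obtain l s where ls: "l \<in> Lns" "inc P l" "s \<in> S l" "\<beta> P l s = a"
    using line_is_slice[OF P a(1)] by blast
  have "\<not> card {r \<in> R l. Arr l r P = s} \<le> Suc 0"
    using card_rows_through[OF ls(1) _ ls(3)] P ls(2) order_ge2 by simp
  moreover have "finite {r \<in> R l. Arr l r P = s}"
    using orthogonal_array.finite_rows[OF line_array[OF ls(1)]] by simp
  ultimately obtain r1 r2 where
    "r1 \<in> {r \<in> R l. Arr l r P = s}" "r2 \<in> {r \<in> R l. Arr l r P = s}" "r1 \<noteq> r2"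
    by (meson card_le_Suc0_iff_eq)
  then have r: "r1 \<in> R l" "r2 \<in> R l" "r1 \<noteq> r2" "Arr l r1 P = s" "Arr l r2 P = s" by simp_all
  have "hline l r1 \<noteq> hline l r2" using hline_inj[OF ls(1) r(1) ls(1) r(2)] r(3) by blast
  moreover have "hline l r1 \<in> HLns" "hline l r2 \<in> HLns" using hline_in_HLns ls(1) r(1,2) by blast+
  ultimately show thesis using that P ls a r by simp
qed

lemma hline_through_points_of_distinct_fibres:
  assumes "P \<noteq> Q" and g: "g \<in> HLns" and h: "h \<in> HLns"
    and "(P, x) \<in> g" "(Q, y) \<in> g" "(P, x) \<in> h" "(Q, y) \<in> h"
  shows "g = h"
proof -
  obtain l r where lr: "l \<in> Lns" "r \<in> R l" "g = hline l r" using g by (rule HLnsE)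
  obtain l' r' where lr': "l' \<in> Lns" "r' \<in> R l'" "h = hline l' r'" using h by (rule HLnsE)
  have PQ: "P \<in> points_on l" "Q \<in> points_on l" "P \<in> points_on l'" "Q \<in> points_on l'"
    using assms(4-7) lr(3) lr'(3) by simp_all
  have ll: "l = l'" using join_unique[of P Q l l'] PQ \<open>P \<noteq> Q\<close> lr(1) lr'(1) by blast
  have "Arr l r P = Arr l r' P"
    using slice_eqI[of P l "Arr l r P" "Arr l r' P" x] assms(4,6) lr lr' ll PQ array_entry_in by force
  moreover have "Arr l r Q = Arr l r' Q"
    using slice_eqI[of Q l "Arr l r Q" "Arr l r' Q" y] assms(5,7) lr lr' ll PQ array_entry_in by force
  ultimately have "r = r'"
    using orthogonal_array.row_eqI[OF line_array[OF lr(1)] PQ(1,2) \<open>P \<noteq> Q\<close> lr(2)] lr'(2) ll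
    by blast
  then show ?thesis using lr(3) lr'(3) ll by simp
qed

lemma pt_nb_iff:
  assumes p: "p \<in> HPts" and q: "q \<in> HPts"
  shows "pt_nb HLns p q \<longleftrightarrow> fst p = fst q"
proof -
  obtain P x Q y where pq: "p = (P, x)" "q = (Q, y)" by (cases p, cases q) blast
  show ?thesis
  proof
    assume nb: "pt_nb HLns p q"
    show "fst p = fst q"
    proof (rule ccontr)
      assume "fst p \<noteq> fst q"
      then have "P \<noteq> Q" "p \<noteq> q" using pq by auto
      then show False
        using nb hline_through_points_of_distinct_fibres[of P Q] pq unfolding pt_nb_def by blast
    qed
  next
    assume "fst p = fst q"
    then have "P = Q" using pq by simp
    show "pt_nb HLns p q"
    proof (cases "x = y")
      case False
      obtain g h where "g \<in> HLns" "h \<in> HLns" "g \<noteq> h"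
        "(P, x) \<in> g" "(P, y) \<in> g" "(P, x) \<in> h" "(P, y) \<in> h"
        using two_hlines_through_fibre_points[of P x y] p q pq \<open>P = Q\<close> False by auto
      then show ?thesis using pq \<open>P = Q\<close> unfolding pt_nb_def by blast
    qed (use pq \<open>P = Q\<close> in \<open>simp add: pt_nb_def\<close>)
  qed
qed

lemma hlines_inter_distinct_lines:
  assumes l: "l \<in> Lns" "r \<in> R l" and l': "l' \<in> Lns" "r' \<in> R l'" and "l \<noteq> l'"
  obtains p where "hline l r \<inter> hline l' r' = {p}"
proof -
  obtain P where P: "P \<in> Pts" "inc P l" "inc P l'"
    using ex1_implies_ex[OF projective_plane_ex1_point[OF projective_plane l(1) l'(1) \<open>l \<noteq> l'\<close>]]
    by blast
  obtain x where x: "x \<in> slice l r P" "x \<in> slice l' r' P"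
    using ex1_implies_ex[OF ex1_slices_meet[OF P(1) l(1) P(2) l'(1) P(3) \<open>l \<noteq> l'\<close>
          array_entry_in[OF l P(1,2)] array_entry_in[OF l' P(1,3)]]] by blast
  have "hline l r \<inter> hline l' r' = {(P, x)}"
  proof (intro equalityI subsetI)
    fix q assume q: "q \<in> hline l r \<inter> hline l' r'"
    obtain Q y where "q = (Q, y)" by (cases q)
    with q have Q: "Q \<in> Pts" "inc Q l" "inc Q l'" and y: "y \<in> slice l r Q" "y \<in> slice l' r' Q"
      by simp_all
    have "Q = P" using meet_unique[OF l(1) l'(1) \<open>l \<noteq> l'\<close>] Q P by blast
    then have "y = x"
      using ex1_slices_meet[OF P(1) l(1) P(2) l'(1) P(3) \<open>l \<noteq> l'\<close>
          array_entry_in[OF l P(1,2)] array_entry_in[OF l' P(1,3)]] x y by blast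
    then show "q \<in> {(P, x)}" using \<open>q = (Q, y)\<close> \<open>Q = P\<close> by simp
  qed (use P x in simp)
  then show thesis by (rule that)
qed

lemma hlines_inter_same_line:
  assumes l: "l \<in> Lns" and r: "r \<in> R l" "r' \<in> R l"
  obtains P x y where "x \<noteq> y" "(P, x) \<in> hline l r" "(P, y) \<in> hline l r"
    "(P, x) \<in> hline l r'" "(P, y) \<in> hline l r'"
proof -
  obtain P where P: "P \<in> points_on l" "Arr l r P = Arr l r' P"
    using orthogonal_array.rows_agree_somewhere[OF line_array[OF l] finite_points_on[OF l]
        card_points_on[OF l] r] by blast
  obtain x y where "x \<in> slice l r P" "y \<in> slice l r P" "x \<noteq> y"
    using affine_plane_order.line_two_points[OF fibre_affine slice_line_of_row[OF l r(1)]] P(1)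
    by blast
  then show thesis by (intro that[of x y P]) (use P in simp_all)
qed

lemma ln_nb_hline_iff:
  assumes l: "l \<in> Lns" "r \<in> R l" and l': "l' \<in> Lns" "r' \<in> R l'"
  shows "ln_nb (hline l r) (hline l' r') \<longleftrightarrow> l = l'"
proof
  assume nb: "ln_nb (hline l r) (hline l' r')"
  show "l = l'"
  proof (rule ccontr)
    assume "l \<noteq> l'"
    then obtain p0 where p0: "hline l r \<inter> hline l' r' = {p0}"
      by (rule hlines_inter_distinct_lines[OF l l'])
    have "hline l r \<noteq> hline l' r'" using hline_inj[OF l l'] \<open>l \<noteq> l'\<close> by blast
    with nb obtain p q where "p \<noteq> q" "p \<in> hline l r \<inter> hline l' r'" "q \<in> hline l r \<inter> hline l' r'"
      unfolding ln_nb_def by blast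
    then show False unfolding p0 by simp
  qed
next
  assume "l = l'"
  then have "r' \<in> R l" using l'(2) by simp
  then obtain P x y where "x \<noteq> y" "(P, x) \<in> hline l r" "(P, y) \<in> hline l r"
    "(P, x) \<in> hline l r'" "(P, y) \<in> hline l r'"
    by (rule hlines_inter_same_line[OF l])
  moreover have "(P, x) \<noteq> (P, y)" using \<open>x \<noteq> y\<close> by simp
  ultimately show "ln_nb (hline l r) (hline l' r')" unfolding ln_nb_def \<open>l = l'\<close> by blast
qed

lemma hlines_meet:
  assumes "g \<in> HLns" "h \<in> HLns" shows "g \<inter> h \<noteq> {}"
proof -
  obtain l r where l: "l \<in> Lns" "r \<in> R l" "g = hline l r" using assms(1) by (rule HLnsE)
  obtain l' r' where l': "l' \<in> Lns" "r' \<in> R l'" "h = hline l' r'" using assms(2) by (rule HLnsE)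
  show ?thesis
  proof (cases "l = l'")
    case True
    then have "r' \<in> R l" using l'(2) by simp
    then obtain P x y where "(P, x) \<in> hline l r" "(P, x) \<in> hline l r'"
      by (rule hlines_inter_same_line[OF l(1,2)])
    then show ?thesis using l(3) l'(3) True by blast
  next
    case False
    obtain p0 where "hline l r \<inter> hline l' r' = {p0}"
      by (rule hlines_inter_distinct_lines[OF l(1,2) l'(1,2) False])
    then show ?thesis using l(3) l'(3) by simp
  qed
qed

lemma rows_nonempty: "l \<in> Lns \<Longrightarrow> R l \<noteq> {}"
  using orthogonal_array.card_rows[OF line_array] order_ge2 by fastforce

lemma row_through:
  assumes "l \<in> Lns" "P \<in> points_on l" "s \<in> S l" shows "\<exists>r\<in>R l. Arr l r P = s"
proof -
  have "card {r \<in> R l. Arr l r P = s} \<noteq> 0" using card_rows_through[OF assms] order_ge2 by simp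
  then show ?thesis by (metis (mono_tags, lifting) card.empty empty_Collect_eq)
qed

lemma hpoints_joined:
  assumes p: "p \<in> HPts" and q: "q \<in> HPts" shows "\<exists>g\<in>HLns. p \<in> g \<and> q \<in> g"
proof -
  obtain P x Q y where pq: "p = (P, x)" "q = (Q, y)" by (cases p, cases q) blast
  with assms have P: "P \<in> Pts" "x \<in> X P" and Q: "Q \<in> Pts" "y \<in> X Q" by simp_all
  consider "P = Q" "x = y" | "P = Q" "x \<noteq> y" | "P \<noteq> Q" by blast
  then show ?thesis
  proof cases
    case 1
    obtain l where l: "l \<in> Lns" "inc P l" using ex_line_through[OF P(1)] by blast
    obtain s where s: "s \<in> S l" "x \<in> \<beta> P l s" using ex_slice_containing[OF P(1) l P(2)] by blast
    obtain r where "r \<in> R l" "Arr l r P = s" using row_through[OF l(1) _ s(1)] P(1) l(2) by blast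
    then have "hline l r \<in> HLns" "p \<in> hline l r" using hline_in_HLns[OF l(1)] pq P l s by auto
    then show ?thesis using pq 1 by blast
  next
    case 2
    then have "y \<in> X P" using Q(2) by simp
    then obtain g h where "g \<in> HLns" "(P, x) \<in> g" "(P, y) \<in> g"
      by (rule two_hlines_through_fibre_points[OF P(1,2) _ 2(2)])
    then show ?thesis using pq 2 by blast
  next
    case 3
    obtain l where l: "l \<in> Lns" "inc P l" "inc Q l"
      using ex1_implies_ex[OF projective_plane_ex1_line[OF projective_plane P(1) Q(1) 3]] by blast
    obtain s where s: "s \<in> S l" "x \<in> \<beta> P l s" using ex_slice_containing[OF P(1) l(1,2) P(2)] by blast
    obtain t where t: "t \<in> S l" "y \<in> \<beta> Q l t" using ex_slice_containing[OF Q(1) l(1,3) Q(2)] by blast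
    have "P \<in> points_on l" "Q \<in> points_on l" using P(1) Q(1) l(2,3) by simp_all
    then obtain r where "r \<in> R l" "Arr l r P = s" "Arr l r Q = t"
      using ex1_implies_ex[OF orthogonal_array.ex1_row[OF line_array[OF l(1)] _ _ 3 s(1) t(1)]] by blast
    then have "hline l r \<in> HLns" "p \<in> hline l r" "q \<in> hline l r"
      using hline_in_HLns[OF l(1)] pq P Q l s t by auto
    then show ?thesis by blast
  qed
qed

text \<open>The image plane has to live on the point type of H, so each point P of the projective
  plane is represented by an arbitrarily chosen point over it.\<close>
definition base_point :: "'a \<Rightarrow> 'a \<times> 'x" where
  "base_point P = (P, SOME x. x \<in> X P)"

lemma inj_base_point: "inj base_point"
  by (rule injI) (simp add: base_point_def)

lemma base_point_in_HPts: "P \<in> Pts \<Longrightarrow> base_point P \<in> HPts"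
  using affine_plane_order.points_nonempty[OF fibre_affine]
  by (simp add: base_point_def some_in_eq)

lemma base_points_of_hline:
  assumes "l \<in> Lns" "r \<in> R l"
  shows "(base_point \<circ> fst) ` hline l r = base_point ` points_on l"
proof -
  have "fst ` hline l r = points_on l"
  proof
    show "fst ` hline l r \<subseteq> points_on l" by (auto simp: H_line_def)
    show "points_on l \<subseteq> fst ` hline l r"
    proof
      fix P assume "P \<in> points_on l"
      then obtain x where "(P, x) \<in> hline l r" using ex_point_over[OF assms] by blast
      then show "P \<in> fst ` hline l r" by (rule image_eqI[rotated]) simp
    qed
  qed
  then show ?thesis using image_image[of base_point fst "hline l r"] by simp
qed

lemma PH_plane: "PH_plane HPts HLns"
proof -
  define \<phi> :: "'a \<times> 'x \<Rightarrow> 'a \<times> 'x" where "\<phi> = base_point \<circ> fst"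
  define h where "h l = base_point ` points_on l" for l
  have image_hline: "\<phi> ` hline l r = h l" if "l \<in> Lns" "r \<in> R l" for l r
    using base_points_of_hline[OF that] by (simp add: \<phi>_def h_def)
  have inj_h: "inj_on h Lns"
  proof (rule inj_onI)
    fix l l' assume l: "l \<in> Lns" "l' \<in> Lns" and "h l = h l'"
    then have eq: "points_on l = points_on l'"
      by (simp add: h_def inj_image_eq_iff[OF inj_base_point])
    obtain P Q where "P \<in> points_on l" "Q \<in> points_on l" "P \<noteq> Q" by (rule two_points_on_line[OF l(1)])
    then show "l = l'" using join_unique[of P Q l l'] eq l by blast
  qed
  have image_plane: "projective_plane (base_point ` Pts) (h ` Lns) (\<in>)"
    by (rule projective_plane_relabel[OF projective_plane inj_on_subset[OF inj_base_point]
          inj_h]) (simp_all add: h_def inj_image_mem_iff[OF inj_base_point])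
  have image_points: "\<phi> ` HPts = base_point ` Pts"
  proof
    show "\<phi> ` HPts \<subseteq> base_point ` Pts" by (auto simp: \<phi>_def H_points_def)
    show "base_point ` Pts \<subseteq> \<phi> ` HPts"
    proof
      fix z assume "z \<in> base_point ` Pts"
      then obtain P where "P \<in> Pts" "z = base_point P" by blast
      then show "z \<in> \<phi> ` HPts"
        by (intro image_eqI[OF _ base_point_in_HPts]) (simp_all add: \<phi>_def base_point_def)
    qed
  qed
  have image_lines: "image \<phi> ` HLns = h ` Lns"
  proof (intro equalityI subsetI)
    fix G assume "G \<in> image \<phi> ` HLns"
    then obtain l r where "l \<in> Lns" "r \<in> R l" "G = \<phi> ` hline l r" by (auto simp: HLns_iff)
    then show "G \<in> h ` Lns" using image_hline by simp
  next
    fix G assume "G \<in> h ` Lns"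
    then obtain l where l: "l \<in> Lns" "G = h l" by blast
    then obtain r where r: "r \<in> R l" using rows_nonempty by blast
    have "\<phi> ` hline l r \<in> image \<phi> ` HLns" using hline_in_HLns[OF l(1) r] by (rule imageI)
    then show "G \<in> image \<phi> ` HLns" using image_hline[OF l(1) r] l(2) by simp
  qed
  have pt_nb_image: "\<forall>p\<in>HPts. \<forall>q\<in>HPts. \<phi> p = \<phi> q \<longleftrightarrow> pt_nb HLns p q"
    using pt_nb_iff by (simp add: \<phi>_def inj_eq[OF inj_base_point])
  have ln_nb_image: "\<forall>g\<in>HLns. \<forall>g'\<in>HLns. \<phi> ` g = \<phi> ` g' \<longleftrightarrow> ln_nb g g'"
  proof (intro ballI)
    fix g g' assume "g \<in> HLns" "g' \<in> HLns"
    then obtain l r l' r' where l: "l \<in> Lns" "r \<in> R l" "g = hline l r"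
      and l': "l' \<in> Lns" "r' \<in> R l'" "g' = hline l' r'" by (meson HLnsE)
    then show "\<phi> ` g = \<phi> ` g' \<longleftrightarrow> ln_nb g g'"
      using image_hline inj_onD[OF inj_h] ln_nb_hline_iff[OF l(1,2) l'(1,2)] by auto
  qed
  have lines_subset: "\<forall>g\<in>HLns. g \<subseteq> HPts"
  proof
    fix g assume "g \<in> HLns"
    then obtain l r where "l \<in> Lns" "r \<in> R l" "g = hline l r" by (rule HLnsE)
    then show "g \<subseteq> HPts" using hline_subset by simp
  qed
  show ?thesis
    unfolding PH_plane_def
  proof (intro conjI lines_subset)
    show "\<forall>p\<in>HPts. \<forall>q\<in>HPts. \<exists>g\<in>HLns. p \<in> g \<and> q \<in> g" using hpoints_joined by blast
    show "\<forall>g\<in>HLns. \<forall>g'\<in>HLns. g \<inter> g' \<noteq> {}" using hlines_meet by blast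
  qed (intro exI[of _ "base_point ` Pts"] exI[of _ "h ` Lns"] exI[of _ "(\<in>)"] exI[of _ \<phi>]
      exI[of _ "image \<phi>"] conjI image_plane image_points image_lines pt_nb_image ln_nb_image, blast)
qed

lemma hline_Sigma: "hline l r = Sigma (points_on l) (slice l r)"
  by (auto simp: H_line_def)

lemma card_hline:
  assumes "l \<in> Lns" "r \<in> R l" shows "finite (hline l r)" "card (hline l r) = m * (m + 1)"
proof -
  have fin: "\<forall>P\<in>points_on l. finite (slice l r P)" using finite_slice[OF assms] by blast
  show "finite (hline l r)"
    unfolding hline_Sigma using finite_points_on[OF assms(1)] fin by blast
  have "card (hline l r) = (\<Sum>P\<in>points_on l. card (slice l r P))"
    unfolding hline_Sigma by (rule card_SigmaI[OF finite_points_on[OF assms(1)] fin])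
  also have "\<dots> = (m + 1) * m" using card_slice[OF assms] card_points_on[OF assms(1)] by simp
  finally show "card (hline l r) = m * (m + 1)" by simp
qed

lemma neighbours_on_hline:
  assumes l: "l \<in> Lns" "r \<in> R l" and p: "(P, x) \<in> hline l r"
  shows "{q \<in> hline l r. pt_nb HLns (P, x) q} = Pair P ` slice l r P"
proof -
  have "(P, x) \<in> HPts" using p hline_subset[OF l] by blast
  then have "pt_nb HLns (P, x) q \<longleftrightarrow> fst q = P" if "q \<in> hline l r" for q
    using pt_nb_iff[of "(P, x)" q] that hline_subset[OF l] by auto
  then show ?thesis using p by auto
qed

lemma nbhd_pts_eq:
  assumes "(P, x) \<in> HPts" shows "nbhd_pts HPts HLns (P, x) = Pair P ` X P"
  using pt_nb_iff[OF assms] assms unfolding nbhd_pts_def by (auto simp: H_points_def)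

lemma nbhd_lines_eq:
  assumes p: "(P, x) \<in> HPts" shows "nbhd_lines HPts HLns (P, x) = image (Pair P) ` AL P"
proof (intro equalityI subsetI)
  have P: "P \<in> Pts" using p by simp
  fix G assume "G \<in> nbhd_lines HPts HLns (P, x)"
  then obtain g where g: "g \<in> HLns" "G = g \<inter> Pair P ` X P" "G \<noteq> {}"
    unfolding nbhd_lines_def nbhd_pts_eq[OF p] by blast
  then obtain l r where l: "l \<in> Lns" "r \<in> R l" "g = hline l r" by (meson HLnsE)
  then have "inc P l" using g(2,3) hline_fibre[OF l(1,2) P] by (auto split: if_splits)
  then show "G \<in> image (Pair P) ` AL P"
    using g(2) l hline_fibre[OF l(1,2) P] slice_line_of_row[OF l(1,2) P] by simp
next
  have P: "P \<in> Pts" using p by simp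
  fix G assume "G \<in> image (Pair P) ` AL P"
  then obtain a where a: "a \<in> AL P" "G = Pair P ` a" by blast
  obtain l s where l: "l \<in> Lns" "inc P l" "s \<in> S l" "\<beta> P l s = a"
    by (rule line_is_slice[OF P a(1)])
  obtain r where r: "r \<in> R l" "Arr l r P = s" using row_through[OF l(1) _ l(3)] P l(2) by blast
  have "hline l r \<inter> Pair P ` X P = G" using hline_fibre[OF l(1) r(1) P] l r a by simp
  moreover have "G \<noteq> {}" using a affine_plane_order.line_nonempty[OF fibre_affine[OF P]] by blast
  ultimately show "G \<in> nbhd_lines HPts HLns (P, x)"
    unfolding nbhd_lines_def nbhd_pts_eq[OF p] using hline_in_HLns[OF l(1) r(1)] by blast
qed

text \<open>The lines of H restricting to the slice \<beta> P l s are exactly the rows of the array of l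
  with entry s in column P.\<close>
lemma card_restricting_hlines:
  assumes p: "(P, x) \<in> HPts" and G: "G \<in> nbhd_lines HPts HLns (P, x)"
  shows "card {g \<in> HLns. g \<inter> nbhd_pts HPts HLns (P, x) = G} = m"
proof -
  have P: "P \<in> Pts" using p by simp
  obtain a where a: "a \<in> AL P" "G = Pair P ` a" using G nbhd_lines_eq[OF p] by blast
  obtain l s where l: "l \<in> Lns" "inc P l" "s \<in> S l" "\<beta> P l s = a"
    by (rule line_is_slice[OF P a(1)])
  have "{g \<in> HLns. g \<inter> Pair P ` X P = G} = hline l ` {r \<in> R l. Arr l r P = s}"
  proof (intro equalityI subsetI)
    fix g assume "g \<in> {g \<in> HLns. g \<inter> Pair P ` X P = G}"
    then have g: "g \<in> HLns" "g \<inter> Pair P ` X P = G" by simp_all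
    obtain l' r' where l': "l' \<in> Lns" "r' \<in> R l'" "g = hline l' r'" using g(1) by (rule HLnsE)
    have "G \<noteq> {}" using a affine_plane_order.line_nonempty[OF fibre_affine[OF P]] by blast
    then have "inc P l'" using g(2) hline_fibre[OF l'(1,2) P] l'(3) by (auto split: if_splits)
    then have "slice l' r' P = \<beta> P l s"
      using g(2) hline_fibre[OF l'(1,2) P] l'(3) a(2) l(4) by (simp add: inj_image_eq_iff[OF inj_Pair])
    then have "l' = l \<and> Arr l' r' P = s"
      using slice_inj[OF P l'(1) \<open>inc P l'\<close> l(1,2) array_entry_in[OF l'(1,2) P \<open>inc P l'\<close>] l(3)] by blast
    then show "g \<in> hline l ` {r \<in> R l. Arr l r P = s}" using l'(2,3) by blast
  next
    fix g assume "g \<in> hline l ` {r \<in> R l. Arr l r P = s}"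
    then obtain r where r: "r \<in> R l" "Arr l r P = s" "g = hline l r" by blast
    then show "g \<in> {g \<in> HLns. g \<inter> Pair P ` X P = G}"
      using hline_in_HLns[OF l(1)] hline_fibre[OF l(1) r(1) P] l a by simp
  qed
  moreover have "inj_on (hline l) {r \<in> R l. Arr l r P = s}"
    using hline_inj[OF l(1) _ l(1)] by (auto intro!: inj_onI)
  then have "card (hline l ` {r \<in> R l. Arr l r P = s}) = card {r \<in> R l. Arr l r P = s}"
    by (rule card_image)
  ultimately show ?thesis
    unfolding nbhd_pts_eq[OF p] using card_rows_through[OF l(1) _ l(3)] P l(2) by simp
qed

lemma card_neighbours_on_hline:
  assumes g: "g \<in> HLns" and p: "p \<in> g" shows "card {q \<in> g. pt_nb HLns p q} = m"
proof -
  obtain l r where l: "l \<in> Lns" "r \<in> R l" "g = hline l r" using g by (rule HLnsE)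
  obtain P x where "p = (P, x)" by (cases p)
  with p l(3) have Px: "(P, x) \<in> hline l r" by simp
  then have "P \<in> Pts" "inc P l" by simp_all
  have "card (Pair P ` slice l r P) = card (slice l r P)"
    by (rule card_image[OF inj_on_subset[OF inj_Pair subset_UNIV]])
  then show ?thesis
    using neighbours_on_hline[OF l(1,2) Px] card_slice[OF l(1,2) \<open>P \<in> Pts\<close> \<open>inc P l\<close>]
      \<open>p = (P, x)\<close> l(3) by simp
qed

lemma tr_PH_plane: "tr_PH_plane HPts HLns m m"
proof -
  have "finite g \<and> card g = m * (m + 1)" if g: "g \<in> HLns" for g
  proof -
    obtain l r where "l \<in> Lns" "r \<in> R l" "g = hline l r" using g by (rule HLnsE)
    then show ?thesis using card_hline by simp
  qed
  then show ?thesis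
    unfolding tr_PH_plane_def using PH_plane card_neighbours_on_hline by simp
qed

lemma uniform_PH_2: "uniform_PH 2 HPts HLns"
proof -
  have "uniform_AH (Suc 0) (nbhd_pts HPts HLns p) (nbhd_lines HPts HLns p) \<and>
      restriction_count_const HPts HLns p" if p: "p \<in> HPts" for p
  proof -
    obtain P x where Px: "p = (P, x)" "(P, x) \<in> HPts" using p by (cases p) simp
    then have P: "P \<in> Pts" by simp
    have "affine_plane (Pair P ` X P) (image (Pair P) ` AL P) (\<in>)"
      by (rule affine_plane_relabel[OF affine_plane_order.affine_plane[OF fibre_affine[OF P]]])
        (auto simp: inj_image_mem_iff[OF inj_Pair] inj_on_def)
    moreover have "\<forall>G\<in>image (Pair P) ` AL P. G \<subseteq> Pair P ` X P"
      using affine_plane_order.line_subset[OF fibre_affine[OF P]] by blast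
    moreover have "restriction_count_const HPts HLns p"
      unfolding restriction_count_const_def Px(1) using card_restricting_hlines[OF Px(2)] by blast
    ultimately show ?thesis using nbhd_pts_eq[OF Px(2)] nbhd_lines_eq[OF Px(2)] Px(1) by simp
  qed
  then show ?thesis using PH_plane by (simp add: numeral_2_eq_2)
qed

end

theorem mainTheorem1:
  fixes m :: nat
    and Pts :: "'a set" and Lns :: "'b set" and inc :: "'a \<Rightarrow> 'b \<Rightarrow> bool"
    and X :: "'a \<Rightarrow> 'x set" and AL :: "'a \<Rightarrow> 'x set set"
    and R :: "'b \<Rightarrow> 'r set" and S :: "'b \<Rightarrow> 's set" and Arr :: "'b \<Rightarrow> 'r \<Rightarrow> 'a \<Rightarrow> 's"
    and \<pi> :: "'a \<Rightarrow> 'b \<Rightarrow> 'x set set" and \<beta> :: "'a \<Rightarrow> 'b \<Rightarrow> 's \<Rightarrow> 'x set"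
  assumes "m \<ge> 2"
    and "projective_plane_of_order Pts Lns inc m"
    and "\<forall>P\<in>Pts. affine_plane_of_order (X P) (AL P) m"
    and "\<forall>l\<in>Lns. OA2 (R l) {P\<in>Pts. inc P l} (S l) (Arr l) m"
    and "\<forall>P\<in>Pts. bij_betw (\<pi> P) {l\<in>Lns. inc P l} (parallel_classes (X P) (AL P))"
    and "\<forall>P\<in>Pts. \<forall>l\<in>Lns. inc P l \<longrightarrow> bij_betw (\<beta> P l) (S l) (\<pi> P l)"
  shows "uniform_PH 2 (H_points Pts X) (H_lines Pts Lns inc R \<beta> Arr) \<and>
         tr_PH_plane (H_points Pts X) (H_lines Pts Lns inc R \<beta> Arr) m m"
proof -
  interpret hjelmslev_construction m Pts Lns inc X AL R S Arr \<pi> \<beta>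
    using assms by unfold_locales
  show ?thesis using uniform_PH_2 tr_PH_plane ..
qed

end
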